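(* Assume CH. There exists a set $A\subseteq\mathbb{R}^2$ such that for every $y\in\mathbb{R}$ the horizontal slice $A^y=\{x:(x,y)\in A\}$ is a strong Luzin set, for every $x\in\mathbb{R}$ the vertical slice $A_x=\{y:(x,y)\in A\}$ is a strong Sierpiński set, and $A$ is both completely $\mathcal{M}$-nonmeasurable and completely $\mathcal{N}$-nonmeasurable in $\mathbb{R}^2$.
   Context: $\mathcal{M}$ and $\mathcal{N}$ denote the $\sigma$-ideals of meager and Lebesgue-null sets (on $\mathbb{R}$ or $\mathbb{R}^2$). A Luzin set is a set $L\subseteq\mathbb{R}$ with $|L|=\mathfrak{c}$ such that $L\cap M$ is countable for every meager $M$; it is strong Luzin if moreover $L\cap B$ is uncountable for every non-meager Borel $B$. A Sierpiński set is $S\subseteq\mathbb{R}$ with $|S|=\mathfrak{c}$ and $S\cap N$ countable for every null $N$; strong Sierpiński if moreover $S\cap B$ is uncountable for every Borel $B$ of positive measure. A set $A\subseteq\mathbb{R}^2$ is completely $\mathcal{I}$-nonmeasurable if $A$ meets every Borel set $B\notin\mathcal{I}$ and contains no Borel set $B\notin\mathcal{I}$. *)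

theory Defs
  imports "HOL-Analysis.Analysis" "HOL-Library.Equipollence"
begin

definition nowhere_dense :: "'a::topological_space set \<Rightarrow> bool" where
  "nowhere_dense S \<longleftrightarrow> interior (closure S) = {}"

definition meager :: "'a::topological_space set \<Rightarrow> bool" where
  "meager M \<longleftrightarrow> (\<exists>F. countable F \<and> (\<forall>N\<in>F. nowhere_dense N) \<and> M \<subseteq> \<Union>F)"

definition lnull :: "'a::euclidean_space set \<Rightarrow> bool" where
  "lnull N \<longleftrightarrow> N \<in> null_sets lebesgue"

definition CH :: bool where
  "CH \<longleftrightarrow> (\<forall>X::real set. uncountable X \<longrightarrow> X \<approx> (UNIV::real set))"

definition luzin_set :: "real set \<Rightarrow> bool" where
  "luzin_set L \<longleftrightarrow> L \<approx> (UNIV::real set) \<and> (\<forall>M. meager M \<longrightarrow> countable (L \<inter> M))"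

definition strong_luzin_set :: "real set \<Rightarrow> bool" where
  "strong_luzin_set L \<longleftrightarrow> luzin_set L \<and>
     (\<forall>B \<in> sets borel. \<not> meager B \<longrightarrow> uncountable (L \<inter> B))"

definition sierpinski_set :: "real set \<Rightarrow> bool" where
  "sierpinski_set S \<longleftrightarrow> S \<approx> (UNIV::real set) \<and> (\<forall>N. lnull N \<longrightarrow> countable (S \<inter> N))"

definition strong_sierpinski_set :: "real set \<Rightarrow> bool" where
  "strong_sierpinski_set S \<longleftrightarrow> sierpinski_set S \<and>
     (\<forall>B \<in> sets borel. \<not> lnull B \<longrightarrow> uncountable (S \<inter> B))"

definition completely_nonmeasurable :: "('a::topological_space set \<Rightarrow> bool) \<Rightarrow> 'a set \<Rightarrow> bool" where
  "completely_nonmeasurable I A \<longleftrightarrow>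
     (\<forall>B \<in> sets borel. \<not> I B \<longrightarrow> A \<inter> B \<noteq> {} \<and> \<not> B \<subseteq> A)"

end

theory Submission
  imports Defs
begin

text \<open>Under CH, well-order \<open>\<real>\<close> so that all initial segments are countable and index the
  \<open>G\<^sub>\<delta>\<close> subsets of \<open>\<real>\<close> by reals. At stage \<open>a\<close>, for each of the two ideals \<open>I\<close> (meager,
  null) the \<open>I\<close>-small coded sets with code below \<open>a\<close> have an \<open>I\<close>-small union; from every
  \<open>I\<close>-positive coded set with code below \<open>a\<close> pick a point outside it. The meager-stage points
  are put on all horizontal lines of height below \<open>a\<close>, the null-stage points on all vertical
  lines below \<open>a\<close>. A meager set is covered at some stage, so it meets a horizontal line only
  in points of the countably many earlier stages; a non-meager Borel set contains a non-meager
  coded set and so receives points from uncountably many stages. Thus horizontal slices are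
  strong Luzin and, symmetrically, vertical slices strong Sierpinski sets.

  For complete nonmeasurability, Kuratowski--Ulam (resp. Fubini) gives a non-meager (non-null)
  slice of a non-meager (non-null) Borel set \<open>B\<close> in either direction. The strong slice of \<open>A\<close>
  meets it, and \<open>B \<subseteq> A\<close> is impossible because the transverse slices of \<open>A\<close> are
  Sierpinski (Luzin) sets, hence meager (null).\<close>

section \<open>Meager sets\<close>

lemma meager_subset: "meager M \<Longrightarrow> N \<subseteq> M \<Longrightarrow> meager N"
  unfolding meager_def using subset_trans by metis

lemma nowhere_dense_imp_meager: "nowhere_dense N \<Longrightarrow> meager N"
  unfolding meager_def by (rule exI[of _ "{N}"]) auto

lemma meager_Union:
  assumes "countable \<M>" "\<And>M. M \<in> \<M> \<Longrightarrow> meager M"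
  shows "meager (\<Union>\<M>)"
proof -
  obtain F where F: "\<And>M. M \<in> \<M> \<Longrightarrow> countable (F M) \<and> (\<forall>N\<in>F M. nowhere_dense N) \<and> M \<subseteq> \<Union>(F M)"
    using assms(2) unfolding meager_def by metis
  have "countable (\<Union>M\<in>\<M>. F M)"
    using assms(1) F by (intro countable_UN) auto
  moreover have "\<forall>N\<in>(\<Union>M\<in>\<M>. F M). nowhere_dense N"
    using F by auto
  moreover have "\<Union>\<M> \<subseteq> \<Union>(\<Union>M\<in>\<M>. F M)"
  proof
    fix x assume "x \<in> \<Union>\<M>"
    then obtain M where M: "M \<in> \<M>" "x \<in> M" by blast
    then obtain N where "N \<in> F M" "x \<in> N" using F by blast
    then show "x \<in> \<Union>(\<Union>M\<in>\<M>. F M)" using M(1) by blast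
  qed
  ultimately show ?thesis
    unfolding meager_def by blast
qed

lemma meager_UN: "countable I \<Longrightarrow> (\<And>i. i \<in> I \<Longrightarrow> meager (M i)) \<Longrightarrow> meager (\<Union>i\<in>I. M i)"
  by (rule meager_Union) auto

lemma meager_Un: "meager A \<Longrightarrow> meager B \<Longrightarrow> meager (A \<union> B)"
  using meager_Union[of "{A, B}"] by auto

lemma meager_countable:
  fixes S :: "'a::{t1_space,perfect_space} set"
  assumes "countable S" shows "meager S"
proof -
  have "meager (\<Union>x\<in>S. {x})"
    using assms by (intro meager_UN nowhere_dense_imp_meager) (auto simp: nowhere_dense_def)
  then show ?thesis by simp
qed

lemma meager_closed_cover:
  assumes "meager M"
  obtains F where "countable F" "\<And>N. N \<in> F \<Longrightarrow> closed N \<and> nowhere_dense N" "M \<subseteq> \<Union>F"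
proof -
  obtain F where "countable F" "\<forall>N\<in>F. nowhere_dense N" "M \<subseteq> \<Union>F"
    using assms unfolding meager_def by blast
  then show ?thesis
    using closure_subset by (intro that[of "closure ` F"]) (auto simp: nowhere_dense_def, blast)
qed

lemma open_not_meager:
  fixes U :: "'a::complete_space set"
  assumes "open U" "U \<noteq> {}" shows "\<not> meager U"
proof
  assume "meager U"
  then obtain F where F: "countable F" "\<And>N. N \<in> F \<Longrightarrow> closed N \<and> nowhere_dense N" "U \<subseteq> \<Union>F"
    using meager_closed_cover by blast
  have "closedin euclidean T \<and> euclidean interior_of T = {}" if "T \<in> F" for T
    using F(2)[OF that] unfolding nowhere_dense_def by (auto simp: closure_closed)
  then have "euclidean interior_of \<Union>F = {}"
    using completely_metrizable_space_euclidean F(1) by (intro Baire_category_alt) auto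
  then have "interior (\<Union>F) = {}"
    by simp
  moreover have "U \<subseteq> interior (\<Union>F)"
    using F(3) assms(1) by (rule interior_maximal)
  ultimately show False
    using assms(2) by blast
qed

lemma nowhere_dense_closed_Diff_interior:
  assumes "closed C" shows "nowhere_dense (C - interior C)"
proof -
  have "interior (C - interior C) \<subseteq> interior C \<inter> (C - interior C)"
    using interior_mono interior_subset by blast
  then show ?thesis
    unfolding nowhere_dense_def using assms by (simp add: closed_Diff closure_closed)
qed

lemma borel_Baire_property:
  fixes B :: "'a::topological_space set"
  assumes "B \<in> sets borel"
  shows "\<exists>U. open U \<and> meager (sym_diff B U)"
proof -
  have "B \<in> sigma_sets UNIV {S. open S}" using assms by (simp add: sets_borel)
  then show ?thesis
  proof (induction rule: sigma_sets.induct)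
    case (Basic a) then show ?case
      by (intro exI[of _ a]) (auto simp: meager_def)
  next
    case Empty then show ?case
      by (intro exI[of _ "{}"]) (auto simp: meager_def)
  next
    case (Compl a)
    then obtain U where U: "open U" "meager (sym_diff a U)" by blast
    let ?V = "interior (- U)"
    have "sym_diff (UNIV - a) ?V \<subseteq> sym_diff a U \<union> (- U - ?V)"
      using interior_subset by blast
    moreover have "meager (- U - ?V)"
      using U(1) by (intro nowhere_dense_imp_meager nowhere_dense_closed_Diff_interior) auto
    ultimately show ?case
      using U by (intro exI[of _ ?V]) (auto intro: meager_subset meager_Un)
  next
    case (Union a)
    then obtain U where U: "\<And>i. open (U i) \<and> meager (sym_diff (a i) (U i))" by metis
    have "sym_diff (\<Union>i. a i) (\<Union>i. U i) \<subseteq> (\<Union>i. sym_diff (a i) (U i))"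
      by blast
    moreover have "meager (\<Union>i. sym_diff (a i) (U i))"
      using U by (intro meager_UN) auto
    ultimately show ?case
      using U by (intro exI[of _ "\<Union>i. U i"]) (auto intro: meager_subset)
  qed
qed

lemma meager_linear_image:
  fixes f :: "'a::euclidean_space \<Rightarrow> 'b::euclidean_space"
  assumes f: "linear f" "bij f" and "meager M"
  shows "meager (f ` M)"
proof -
  obtain F where F: "countable F" "\<forall>N\<in>F. nowhere_dense N" "M \<subseteq> \<Union>F"
    using assms(3) unfolding meager_def by blast
  have "nowhere_dense (f ` N)" if "nowhere_dense N" for N
  proof -
    have "interior (closure (f ` N)) = f ` interior (closure N)"
      using f by (simp add: bij_is_inj closure_injective_linear_image[symmetric] interior_bijective_linear_image)
    then show ?thesis
      using that unfolding nowhere_dense_def by simp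
  qed
  then have "\<forall>N\<in>image f ` F. nowhere_dense N"
    using F(2) by blast
  moreover have "countable (image f ` F)"
    using F(1) by simp
  moreover have "f ` M \<subseteq> \<Union>(image f ` F)"
    using F(3) by blast
  ultimately show ?thesis
    unfolding meager_def by blast
qed

section \<open>Lebesgue null sets\<close>

lemma lnull_subset: "lnull B \<Longrightarrow> A \<subseteq> B \<Longrightarrow> lnull A"
  unfolding lnull_def using null_sets_completion_subset by blast

lemma lnull_Union: "countable \<N> \<Longrightarrow> (\<And>N. N \<in> \<N> \<Longrightarrow> lnull N) \<Longrightarrow> lnull (\<Union>\<N>)"
  unfolding lnull_def using null_sets_UN'[of \<N> id] by simp

lemma lnull_countable: "countable A \<Longrightarrow> lnull A"
  unfolding lnull_def by (intro null_sets_completionI countable_imp_null_set_lborel)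

lemma lnull_borel_iff:
  fixes D :: "'a::euclidean_space set"
  assumes "D \<in> sets borel" shows "lnull D \<longleftrightarrow> emeasure lborel D = 0"
  using assms unfolding lnull_def by (simp add: null_sets_completion_iff null_sets_def)

lemma not_lnull_UNIV: "\<not> lnull (UNIV :: 'a::euclidean_space set)"
  by (simp add: lnull_borel_iff)

lemma lnull_gdelta_hull:
  assumes "lnull N" obtains G where "gdelta G" "N \<subseteq> G" "lnull G"
proof -
  obtain G T where "gdelta G" "T \<in> null_sets lebesgue" "N \<union> T = G"
    using assms lebesgue_set_almost_gdelta unfolding lnull_def by blast
  then show ?thesis
    using assms that unfolding lnull_def by (metis Un_upper1 null_sets.Un)
qed

section \<open>\<open>G\<^sub>\<delta>\<close> sets\<close>

lemma closed_imp_gdelta: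
  fixes C :: "'a::metric_space set"
  assumes "closed C" shows "gdelta C"
proof (cases "C = {}")
  case True
  then show ?thesis using gdelta.intros[of "\<lambda>_. {}"] by simp
next
  case False
  let ?T = "\<lambda>n::nat. {x. infdist x C < inverse (Suc n)}"
  have "open (?T n)" for n
    by (intro open_Collect_less continuous_intros)
  moreover have "C = (\<Inter>n. ?T n)"
  proof (intro equalityI subsetI)
    fix x assume x: "x \<in> (\<Inter>n. ?T n)"
    have "infdist x C = 0"
    proof (rule ccontr)
      assume "infdist x C \<noteq> 0"
      then obtain n where "inverse (Suc n) < infdist x C"
        using reals_Archimedean infdist_nonneg[of x C] by (metis order_le_neq_trans)
      then show False using x by (auto dest: spec[of _ n])
    qed
    then show "x \<in> C"
      using False assms in_closure_iff_infdist_zero by (metis closure_closed)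
  qed (use infdist_zero in auto)
  ultimately show ?thesis by (metis gdelta.intros)
qed

lemma gdelta_Inter:
  assumes "countable \<O>" "\<And>S. S \<in> \<O> \<Longrightarrow> open S"
  shows "gdelta (\<Inter>\<O>)"
proof (cases "\<O> = {}")
  case True
  then show ?thesis using gdelta.intros[of "\<lambda>_. UNIV"] by simp
next
  case False
  then show ?thesis
    using assms gdelta.intros[of "from_nat_into \<O>"] by (simp add: from_nat_into range_from_nat_into)
qed

lemma gdelta_enumeration:
  obtains E :: "real \<Rightarrow> 'a::euclidean_space set" where "\<And>G. gdelta G \<Longrightarrow> G \<in> range E"
proof -
  obtain B :: "nat \<Rightarrow> 'a set"
    where "inj B" "\<And>n. open (B n)" and B: "\<And>S. open S \<Longrightarrow> \<exists>K. S = \<Union>{B n |n. n \<in> K}"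
    by (fact univ_second_countable_sequence)
  obtain f :: "nat set \<Rightarrow> real" where f: "bij f"
    using nat_sets_eqpoll_reals unfolding eqpoll_def by blast
  define E where "E b = (\<Inter>m. \<Union>{B n |n. prod_encode (m, n) \<in> inv f b})" for b
  have "G \<in> range E" if "gdelta G" for G
    using that
  proof (induction rule: gdelta.induct)
    case (1 T)
    then have "\<forall>m. \<exists>K. T m = \<Union>{B n |n. n \<in> K}"
      by (intro allI B)
    from choice[OF this] obtain K where K: "\<forall>m. T m = \<Union>{B n |n. n \<in> K m}" ..
    let ?S = "prod_encode ` Sigma UNIV K"
    have "inv f (f ?S) = ?S"
      using f by (simp add: bij_is_inj)
    then have "\<Union>{B n |n. prod_encode (m, n) \<in> inv f (f ?S)} = T m" for m
      using K by (simp add: inj_image_mem_iff[OF inj_prod_encode])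
    then have "\<Inter>(range T) = E (f ?S)"
      unfolding E_def by simp
    then show ?case by (rule range_eqI)
  qed
  then show ?thesis by (rule that)
qed

lemma borel_not_meager_gdelta_subset:
  fixes B :: "'a::complete_space set"
  assumes "B \<in> sets borel" "\<not> meager B"
  shows "\<exists>G. gdelta G \<and> G \<subseteq> B \<and> \<not> meager G"
proof -
  obtain U where U: "open U" "meager (sym_diff B U)"
    using borel_Baire_property[OF assms(1)] by blast
  obtain F where F: "countable F" "\<And>N. N \<in> F \<Longrightarrow> closed N \<and> nowhere_dense N" "sym_diff B U \<subseteq> \<Union>F"
    using meager_closed_cover[OF U(2)] by blast
  let ?G = "U - \<Union>F"
  have "gdelta (\<Inter>(insert U (uminus ` F)))"
    using U(1) F(1,2) by (intro gdelta_Inter) auto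
  moreover have "\<Inter>(insert U (uminus ` F)) = ?G"
    by auto
  ultimately have "gdelta ?G"
    by simp
  moreover have "?G \<subseteq> B"
    using F(3) by blast
  moreover have "\<not> meager ?G"
  proof
    assume "meager ?G"
    moreover have "meager (\<Union>F)"
      using F(1,2) by (intro meager_Union nowhere_dense_imp_meager) auto
    moreover have "U \<subseteq> ?G \<union> \<Union>F"
      by blast
    ultimately have "meager U"
      using meager_Un meager_subset by blast
    moreover have "U \<noteq> {}"
      using U(2) assms(2) meager_subset by blast
    ultimately show False
      using open_not_meager[OF U(1)] by blast
  qed
  ultimately show ?thesis by blast
qed

lemma borel_not_lnull_closed_subset:
  fixes B :: "'a::euclidean_space set"
  assumes "B \<in> sets borel" "\<not> lnull B"
  obtains C where "closed C" "C \<subseteq> B" "\<not> lnull C"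
proof -
  have "B \<in> sets lebesgue"
    using assms(1) by simp
  then obtain S T where S: "fsigma S" "lnull T" "S \<union> T = B"
    using lebesgue_set_almost_fsigma unfolding lnull_def by metis
  from S(1) obtain F :: "nat \<Rightarrow> 'a set" where F: "\<And>n. closed (F n)" "S = \<Union>(range F)"
    by (cases rule: fsigma.cases) auto
  have "\<exists>n. \<not> lnull (F n)"
  proof (rule ccontr)
    assume "\<not> ?thesis"
    then have "lnull S"
      unfolding F(2) by (intro lnull_Union) auto
    then have "lnull B"
      using S(2,3) lnull_Union[of "{S, T}"] by auto
    then show False
      using assms(2) by blast
  qed
  then show ?thesis
    using F S(3) that by blast
qed

text \<open>What the construction uses of the meager and the null ideal: both are \<open>\<sigma>\<close>-ideals
  generated by their \<open>G\<^sub>\<delta>\<close> members, and every positive Borel set has a positive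
  \<open>G\<^sub>\<delta>\<close> subset.\<close>

locale gdelta_regular_sigma_ideal =
  fixes I :: "'a::topological_space set \<Rightarrow> bool"
  assumes subset: "I B \<Longrightarrow> A \<subseteq> B \<Longrightarrow> I A"
    and Union: "countable \<A> \<Longrightarrow> (\<And>A. A \<in> \<A> \<Longrightarrow> I A) \<Longrightarrow> I (\<Union>\<A>)"
    and countable: "countable A \<Longrightarrow> I A"
    and not_UNIV: "\<not> I UNIV"
    and gdelta_cover: "I A \<Longrightarrow> \<exists>\<G>. countable \<G> \<and> (\<forall>G\<in>\<G>. gdelta G \<and> I G) \<and> A \<subseteq> \<Union>\<G>"
    and gdelta_inner: "B \<in> sets borel \<Longrightarrow> \<not> I B \<Longrightarrow> \<exists>G. gdelta G \<and> G \<subseteq> B \<and> \<not> I G"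

lemma gdelta_regular_sigma_ideal_meager: "gdelta_regular_sigma_ideal (meager :: real set \<Rightarrow> bool)"
proof
  fix A :: "real set"
  assume "meager A"
  then obtain F where F: "countable F" "\<And>N. N \<in> F \<Longrightarrow> closed N \<and> nowhere_dense N" "A \<subseteq> \<Union>F"
    using meager_closed_cover by blast
  then show "\<exists>\<G>. countable \<G> \<and> (\<forall>G\<in>\<G>. gdelta G \<and> meager G) \<and> A \<subseteq> \<Union>\<G>"
    by (intro exI[of _ F]) (auto intro: closed_imp_gdelta nowhere_dense_imp_meager)
qed (auto intro: meager_subset meager_Union meager_countable borel_not_meager_gdelta_subset
          simp: open_not_meager)

lemma gdelta_regular_sigma_ideal_lnull: "gdelta_regular_sigma_ideal (lnull :: real set \<Rightarrow> bool)"
proof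
  fix A :: "real set"
  assume "lnull A"
  then obtain G where "gdelta G" "A \<subseteq> G" "lnull G"
    by (rule lnull_gdelta_hull)
  then show "\<exists>\<G>. countable \<G> \<and> (\<forall>G\<in>\<G>. gdelta G \<and> lnull G) \<and> A \<subseteq> \<Union>\<G>"
    by (intro exI[of _ "{G}"]) auto
next
  fix B :: "real set"
  assume "B \<in> sets borel" "\<not> lnull B"
  then obtain C where "closed C" "C \<subseteq> B" "\<not> lnull C"
    by (rule borel_not_lnull_closed_subset)
  then show "\<exists>G. gdelta G \<and> G \<subseteq> B \<and> \<not> lnull G"
    by (blast intro: closed_imp_gdelta)
qed (auto intro: lnull_subset lnull_Union lnull_countable simp: not_lnull_UNIV)

section \<open>The construction under CH\<close>

definition strong_set :: "(real set \<Rightarrow> bool) \<Rightarrow> real set \<Rightarrow> bool" where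
  "strong_set I L \<longleftrightarrow> L \<approx> (UNIV :: real set) \<and> (\<forall>M. I M \<longrightarrow> countable (L \<inter> M)) \<and>
     (\<forall>B \<in> sets borel. \<not> I B \<longrightarrow> uncountable (L \<inter> B))"

lemma strong_luzin_set_iff_strong_set: "strong_luzin_set L \<longleftrightarrow> strong_set meager L"
  unfolding strong_luzin_set_def luzin_set_def strong_set_def by blast

lemma strong_sierpinski_set_iff_strong_set: "strong_sierpinski_set S \<longleftrightarrow> strong_set lnull S"
  unfolding strong_sierpinski_set_def sierpinski_set_def strong_set_def by blast

lemma CH_countable_segments:
  assumes "CH"
  obtains r :: "real rel"
  where "trans r" "\<And>a b. (a, b) \<in> r \<or> (b, a) \<in> r" "\<And>a. countable {b. (b, a) \<in> r}"
proof -
  let ?r = "card_of (UNIV :: real set)"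
  have wo: "wo_rel ?r"
    using card_of_Card_order unfolding card_order_on_def wo_rel_def by blast
  have field: "Field ?r = UNIV"
    by (simp add: Field_card_of)
  have "countable {b. (b, a) \<in> ?r}" for a
  proof -
    have "ordLess2 (card_of (underS ?r a)) ?r"
      by (rule card_of_underS[OF card_of_Card_order]) (simp add: field)
    then have "countable (underS ?r a)"
      using assms eqpoll_iff_card_of_ordIso not_ordLess_ordIso unfolding CH_def by blast
    moreover have "{b. (b, a) \<in> ?r} \<subseteq> insert a (underS ?r a)"
      by (auto simp: underS_def)
    ultimately show ?thesis
      using countable_subset by (metis countable_insert)
  qed
  moreover have "trans ?r"
    using wo_rel.TRANS[OF wo] .
  moreover have "(a, b) \<in> ?r \<or> (b, a) \<in> ?r" for a b
    using wo_rel.TOTALS[OF wo] field by blast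
  ultimately show ?thesis
    using that by blast
qed

locale ch_construction =
  fixes r :: "real rel" and E :: "real \<Rightarrow> real set"
  assumes trans: "trans r"
    and total: "\<And>a b. (a, b) \<in> r \<or> (b, a) \<in> r"
    and countable_segment: "\<And>a. countable {b. (b, a) \<in> r}"
    and gdelta_code: "\<And>G. gdelta G \<Longrightarrow> G \<in> range E"
begin

lemma countable_bounded:
  assumes "countable S" shows "\<exists>a. \<forall>s\<in>S. (s, a) \<in> r"
proof -
  have "countable (\<Union>s\<in>S. {b. (b, s) \<in> r})"
    using assms countable_segment by (intro countable_UN)
  then obtain a where "a \<notin> (\<Union>s\<in>S. {b. (b, s) \<in> r})"
    using uncountable_UNIV_real by (metis UNIV_eq_I)
  then show ?thesis
    using total by blast
qed

definition small_union :: "(real set \<Rightarrow> bool) \<Rightarrow> real \<Rightarrow> real set" where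
  "small_union I a = \<Union>(E ` {b. (b, a) \<in> r \<and> I (E b)})"

definition avoid :: "(real set \<Rightarrow> bool) \<Rightarrow> real \<Rightarrow> real \<Rightarrow> real" where
  "avoid I a c = (SOME x. x \<in> E c - small_union I a)"

definition cross_set :: "(real set \<Rightarrow> bool) \<Rightarrow> (real set \<Rightarrow> bool) \<Rightarrow> (real \<times> real) set" where
  "cross_set I J =
     {(avoid I a c, y) |a c y. (y, a) \<in> r \<and> (c, a) \<in> r \<and> \<not> I (E c)} \<union>
     {(x, avoid J a c) |a c x. (x, a) \<in> r \<and> (c, a) \<in> r \<and> \<not> J (E c)}"

lemma cross_set_swap: "(x, y) \<in> cross_set I J \<longleftrightarrow> (y, x) \<in> cross_set J I"
  unfolding cross_set_def by blast

lemma small_union_mono: "(c, a) \<in> r \<Longrightarrow> small_union I c \<subseteq> small_union I a"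
  unfolding small_union_def using trans by (auto dest: transD)

context
  fixes I :: "real set \<Rightarrow> bool"
  assumes I: "gdelta_regular_sigma_ideal I"
begin

interpretation I: gdelta_regular_sigma_ideal I
  by (fact I)

lemma small_union_small: "I (small_union I a)"
proof -
  have "countable {b. (b, a) \<in> r \<and> I (E b)}"
    by (rule countable_subset[OF _ countable_segment[of a]]) blast
  then show ?thesis
    unfolding small_union_def by (intro I.Union) auto
qed

lemma small_union_cover:
  assumes "I A" obtains a where "A \<subseteq> small_union I a"
proof -
  obtain \<G> where \<G>: "countable \<G>" "\<forall>G\<in>\<G>. gdelta G \<and> I G" "A \<subseteq> \<Union>\<G>"
    using I.gdelta_cover[OF assms] by blast
  then have "\<forall>G\<in>\<G>. \<exists>c. E c = G"
    using gdelta_code by blast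
  from bchoice[OF this] obtain code where code: "\<forall>G\<in>\<G>. E (code G) = G" ..
  obtain a where a: "\<forall>G\<in>\<G>. (code G, a) \<in> r"
    using countable_bounded[of "code ` \<G>"] \<G>(1) by auto
  have "G \<subseteq> small_union I a" if "G \<in> \<G>" for G
    using that a code \<G>(2) unfolding small_union_def by force
  then show ?thesis
    using \<G>(3) that by blast
qed

lemma avoid:
  assumes "\<not> I (E c)"
  shows "avoid I a c \<in> E c" "avoid I a c \<notin> small_union I a"
proof -
  have "E c - small_union I a \<noteq> {}"
    using assms small_union_small I.subset by blast
  then show "avoid I a c \<in> E c" "avoid I a c \<notin> small_union I a"
    unfolding avoid_def by (metis some_in_eq Diff_iff)+
qed

lemma cross_row_uncountable:
  assumes "B \<in> sets borel" "\<not> I B"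
  shows "uncountable ({x. (x, y) \<in> cross_set I J} \<inter> B)"
proof
  let ?X = "{x. (x, y) \<in> cross_set I J} \<inter> B"
  assume "countable ?X"
  obtain c where c: "E c \<subseteq> B" "\<not> I (E c)"
    using I.gdelta_inner[OF assms] gdelta_code by blast
  obtain d where d: "?X \<subseteq> small_union I d"
    using small_union_cover I.countable[OF \<open>countable ?X\<close>] by blast
  obtain a where a: "(d, a) \<in> r" "(y, a) \<in> r" "(c, a) \<in> r"
    using countable_bounded[of "{d, y, c}"] by blast
  let ?x = "avoid I a c"
  have "(?x, y) \<in> cross_set I J"
    unfolding cross_set_def using a c(2) by blast
  then have "?x \<in> small_union I d"
    using avoid(1)[OF c(2)] c(1) d by blast
  then show False
    using avoid(2)[OF c(2)] small_union_mono[OF a(1)] by blast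
qed

end

context
  fixes I J :: "real set \<Rightarrow> bool"
  assumes I: "gdelta_regular_sigma_ideal I" and J: "gdelta_regular_sigma_ideal J"
begin

lemma cross_row_countable:
  assumes "I M"
  shows "countable ({x. (x, y) \<in> cross_set I J} \<inter> M)"
proof -
  obtain g where g: "M \<subseteq> small_union I g"
    using small_union_cover[OF I assms] by blast
  have "J {y}"
    using gdelta_regular_sigma_ideal.countable[OF J] by simp
  then obtain p where p: "y \<in> small_union J p"
    using small_union_cover[OF J] by blast
  let ?S = "(\<lambda>(a, c). avoid I a c) ` ({a. (a, g) \<in> r} \<times> {c. (c, g) \<in> r}) \<union> {x. (x, p) \<in> r}"
  have "{x. (x, y) \<in> cross_set I J} \<inter> M \<subseteq> ?S"
  proof
    fix x assume x: "x \<in> {x. (x, y) \<in> cross_set I J} \<inter> M"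
    then consider (row) a c where "x = avoid I a c" "(c, a) \<in> r" "\<not> I (E c)"
      | (column) a c where "y = avoid J a c" "(x, a) \<in> r" "\<not> J (E c)"
      unfolding cross_set_def by blast
    then show "x \<in> ?S"
    proof cases
      case row
      then have "(g, a) \<notin> r"
        using avoid(2)[OF I row(3)] x g small_union_mono by blast
      then have "(a, g) \<in> r"
        using total by blast
      moreover have "(c, g) \<in> r"
        using row(2) \<open>(a, g) \<in> r\<close> trans by (blast dest: transD)
      ultimately show ?thesis
        using row(1) by blast
    next
      case column
      then have "(p, a) \<notin> r"
        using avoid(2)[OF J column(3)] p small_union_mono by blast
      then have "(a, p) \<in> r"
        using total by blast
      then show ?thesis
        using column(2) trans by (blast dest: transD)
    qed
  qed
  moreover have "countable ?S"
    using countable_segment by simp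
  ultimately show ?thesis
    by (rule countable_subset)
qed

lemma cross_row_strong:
  assumes "CH"
  shows "strong_set I {x. (x, y) \<in> cross_set I J}"
proof -
  have "uncountable {x. (x, y) \<in> cross_set I J}"
    using cross_row_uncountable[OF I, of UNIV] gdelta_regular_sigma_ideal.not_UNIV[OF I] by simp
  then have "{x. (x, y) \<in> cross_set I J} \<approx> (UNIV :: real set)"
    using assms unfolding CH_def by blast
  then show ?thesis
    unfolding strong_set_def using cross_row_countable cross_row_uncountable[OF I] by blast
qed

end

end

section \<open>Slices of planar sets\<close>

lemma closed_slices:
  fixes C :: "('a::topological_space \<times> 'b::topological_space) set"
  assumes "closed C"
  shows "closed {y. (x, y) \<in> C}" "closed {x. (x, y) \<in> C}"
proof -
  have "closed (Pair x -` C)" "closed ((\<lambda>x. (x, y)) -` C)"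
    using assms by (auto intro!: continuous_closed_vimage continuous_intros)
  then show "closed {y. (x, y) \<in> C}" "closed {x. (x, y) \<in> C}"
    by (simp_all add: vimage_def)
qed

lemma open_column_slice:
  fixes U :: "('a::topological_space \<times> 'b::topological_space) set"
  assumes "open U" shows "open {y. (x, y) \<in> U}"
proof -
  have "open (Pair x -` U)"
    using assms by (auto intro!: continuous_open_vimage continuous_intros)
  then show ?thesis
    by (simp add: vimage_def)
qed

lemma sets_borel_slices:
  fixes D :: "('a::topological_space \<times> 'b::topological_space) set"
  assumes "D \<in> sets borel"
  shows "{y. (x, y) \<in> D} \<in> sets borel" "{x. (x, y) \<in> D} \<in> sets borel"
proof -
  have "Pair x \<in> borel_measurable borel" "(\<lambda>x. (x, y)) \<in> borel_measurable borel"
    by (auto intro!: borel_measurable_continuous_onI continuous_intros)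
  then have "Pair x -` D \<inter> space borel \<in> sets borel" "(\<lambda>x. (x, y)) -` D \<inter> space borel \<in> sets borel"
    using measurable_sets assms by blast+
  then show "{y. (x, y) \<in> D} \<in> sets borel" "{x. (x, y) \<in> D} \<in> sets borel"
    by (simp_all add: vimage_def)
qed

lemma closed_nowhere_dense_slices:
  fixes C :: "('a::topological_space \<times> 'b::euclidean_space) set"
  assumes "closed C" "nowhere_dense C"
  shows "meager {x. \<not> nowhere_dense {y. (x, y) \<in> C}}"
proof -
  obtain B :: "nat \<Rightarrow> 'b set"
    where "inj B" and B_open: "\<And>n. open (B n)" and B: "\<And>S. open S \<Longrightarrow> \<exists>K. S = \<Union>{B n |n. n \<in> K}"
    by (fact univ_second_countable_sequence)
  let ?P = "\<lambda>n. {x. B n \<subseteq> {y. (x, y) \<in> C}}"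
  have "nowhere_dense (?P n)" if "B n \<noteq> {}" for n
  proof -
    have "?P n = (\<Inter>y\<in>B n. {x. (x, y) \<in> C})"
      by auto
    then have closed: "closed (?P n)"
      using closed_slices(2)[OF assms(1)] by auto
    have "interior (?P n) \<times> B n \<subseteq> C"
      using interior_subset by fastforce
    then have "interior (?P n) \<times> B n \<subseteq> interior C"
      using B_open by (intro interior_maximal open_Times) auto
    moreover have "interior C = {}"
      using assms unfolding nowhere_dense_def by (simp add: closure_closed)
    ultimately have "interior (?P n) = {}"
      using that by blast
    then show ?thesis
      unfolding nowhere_dense_def using closed by (simp add: closure_closed)
  qed
  then have "meager (\<Union>n\<in>{n. B n \<noteq> {}}. ?P n)"
    by (intro meager_UN nowhere_dense_imp_meager) auto
  moreover have "{x. \<not> nowhere_dense {y. (x, y) \<in> C}} \<subseteq> (\<Union>n\<in>{n. B n \<noteq> {}}. ?P n)"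
  proof
    fix x assume "x \<in> {x. \<not> nowhere_dense {y. (x, y) \<in> C}}"
    then have "interior {y. (x, y) \<in> C} \<noteq> {}"
      unfolding nowhere_dense_def using closed_slices(1)[OF assms(1)] by (simp add: closure_closed)
    moreover obtain K where "interior {y. (x, y) \<in> C} = \<Union>{B n |n. n \<in> K}"
      using B[OF open_interior] by blast
    ultimately obtain n where "B n \<noteq> {}" "B n \<subseteq> interior {y. (x, y) \<in> C}"
      by auto
    then show "x \<in> (\<Union>n\<in>{n. B n \<noteq> {}}. ?P n)"
      using interior_subset by blast
  qed
  ultimately show ?thesis
    by (rule meager_subset)
qed

lemma kuratowski_ulam:
  fixes F :: "('a::topological_space \<times> 'b::euclidean_space) set"
  assumes "meager F"
  shows "meager {x. \<not> meager {y. (x, y) \<in> F}}"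
proof -
  obtain \<C> where \<C>: "countable \<C>" "\<And>C. C \<in> \<C> \<Longrightarrow> closed C \<and> nowhere_dense C" "F \<subseteq> \<Union>\<C>"
    using meager_closed_cover[OF assms] by blast
  have "meager (\<Union>C\<in>\<C>. {x. \<not> nowhere_dense {y. (x, y) \<in> C}})"
    using \<C>(1,2) closed_nowhere_dense_slices by (intro meager_UN) auto
  moreover have "{x. \<not> meager {y. (x, y) \<in> F}} \<subseteq> (\<Union>C\<in>\<C>. {x. \<not> nowhere_dense {y. (x, y) \<in> C}})"
  proof
    fix x assume x: "x \<in> {x. \<not> meager {y. (x, y) \<in> F}}"
    show "x \<in> (\<Union>C\<in>\<C>. {x. \<not> nowhere_dense {y. (x, y) \<in> C}})"
    proof (rule ccontr)
      assume "x \<notin> (\<Union>C\<in>\<C>. {x. \<not> nowhere_dense {y. (x, y) \<in> C}})"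
      then have "meager (\<Union>C\<in>\<C>. {y. (x, y) \<in> C})"
        using \<C>(1) by (intro meager_UN nowhere_dense_imp_meager) auto
      moreover have "{y. (x, y) \<in> F} \<subseteq> (\<Union>C\<in>\<C>. {y. (x, y) \<in> C})"
        using \<C>(3) by blast
      ultimately show False
        using x meager_subset by blast
    qed
  qed
  ultimately show ?thesis
    by (rule meager_subset)
qed

lemma borel_not_meager_column_slice:
  fixes B :: "('a::euclidean_space \<times> 'b::euclidean_space) set"
  assumes "B \<in> sets borel" "\<not> meager B"
  shows "\<exists>x. \<not> meager {y. (x, y) \<in> B}"
proof -
  obtain U where U: "open U" "meager (sym_diff B U)"
    using borel_Baire_property[OF assms(1)] by blast
  have "U \<noteq> {}"
    using U(2) assms(2) by auto
  then have "\<not> meager (fst ` U)"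
    using U(1) by (intro open_not_meager open_image_fst) auto
  then obtain x where x: "x \<in> fst ` U" "meager {y. (x, y) \<in> sym_diff B U}"
    using kuratowski_ulam[OF U(2)] meager_subset[of _ "fst ` U"] by blast
  have "\<not> meager {y. (x, y) \<in> U}"
    using x(1) open_column_slice[OF U(1)] by (intro open_not_meager) force+
  moreover have "{y. (x, y) \<in> U} \<subseteq> {y. (x, y) \<in> B} \<union> {y. (x, y) \<in> sym_diff B U}"
    by blast
  ultimately show ?thesis
    using x(2) meager_Un meager_subset by blast
qed

lemma borel_not_meager_row_slice:
  fixes B :: "('a::euclidean_space \<times> 'b::euclidean_space) set"
  assumes "B \<in> sets borel" "\<not> meager B"
  shows "\<exists>y. \<not> meager {x. (x, y) \<in> B}"
proof -
  have "prod.swap \<in> borel_measurable borel"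
    by (intro borel_measurable_continuous_onI continuous_intros)
  then have "prod.swap -` B \<inter> space borel \<in> sets borel"
    using assms(1) by (rule measurable_sets)
  moreover have "prod.swap -` B \<inter> space borel = prod.swap ` B"
    by force
  ultimately have "prod.swap ` B \<in> sets borel"
    by simp
  moreover have "\<not> meager (prod.swap ` B)"
  proof
    assume "meager (prod.swap ` B)"
    moreover have "linear (prod.swap :: 'b \<times> 'a \<Rightarrow> 'a \<times> 'b)"
      by (rule linearI) (auto simp: prod_eq_iff)
    ultimately have "meager (prod.swap ` prod.swap ` B)"
      using meager_linear_image bij_swap by blast
    then show False
      using assms(2) by (simp add: image_image)
  qed
  ultimately obtain y where "\<not> meager {x. (y, x) \<in> prod.swap ` B}"
    using borel_not_meager_column_slice by blast
  then show ?thesis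
    by auto
qed

lemma borel_not_lnull_slices:
  fixes D :: "('a::euclidean_space \<times> 'b::euclidean_space) set"
  assumes "D \<in> sets borel" "\<not> lnull D"
  shows "\<exists>x. \<not> lnull {y. (x, y) \<in> D}" "\<exists>y. \<not> lnull {x. (x, y) \<in> D}"
proof -
  have D: "D \<in> sets (lborel \<Otimes>\<^sub>M lborel)"
    using assms(1) by (subst lborel_prod) simp
  have positive: "emeasure (lborel \<Otimes>\<^sub>M lborel) D \<noteq> 0"
    using assms by (simp add: lborel_prod lnull_borel_iff)
  show "\<exists>x. \<not> lnull {y. (x, y) \<in> D}"
  proof (rule ccontr)
    assume "\<nexists>x. \<not> lnull {y. (x, y) \<in> D}"
    then have "emeasure lborel (Pair x -` D) = 0" for x
      using lnull_borel_iff[OF sets_borel_slices(1)[OF assms(1), of x]] by (simp add: vimage_def)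
    then show False
      using positive lborel.emeasure_pair_measure_alt[OF D] by simp
  qed
  show "\<exists>y. \<not> lnull {x. (x, y) \<in> D}"
  proof (rule ccontr)
    assume "\<nexists>y. \<not> lnull {x. (x, y) \<in> D}"
    then have "emeasure lborel ((\<lambda>x. (x, y)) -` D) = 0" for y
      using lnull_borel_iff[OF sets_borel_slices(2)[OF assms(1), of y]] by (simp add: vimage_def)
    then show False
      using positive lborel_pair.emeasure_pair_measure_alt2[OF D] by simp
  qed
qed

lemma ex_lnull_comeager: "\<exists>Z :: real set. lnull Z \<and> meager (- Z)"
proof -
  obtain G :: "real set" where G: "gdelta G" "\<rat> \<subseteq> G" "lnull G"
    using lnull_gdelta_hull[OF lnull_countable[OF countable_rat]] by blast
  from G(1) obtain T :: "nat \<Rightarrow> real set" where T: "\<And>n. open (T n)" "G = \<Inter>(range T)"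
    by (cases rule: gdelta.cases) auto
  have "nowhere_dense (- T n)" for n
  proof -
    have "closure \<rat> \<subseteq> closure (T n)"
      using G(2) T(2) by (intro closure_mono) blast
    then have "interior (- T n) = {}"
      by (auto simp: Rats_closure_real interior_complement)
    then show ?thesis
      using T(1) unfolding nowhere_dense_def by (simp add: closed_Compl closure_closed)
  qed
  then have "meager (\<Union>n. - T n)"
    by (intro meager_UN nowhere_dense_imp_meager) auto
  moreover have "- G = (\<Union>n. - T n)"
    using T(2) by auto
  ultimately show ?thesis
    using G(3) by auto
qed

lemma luzin_set_lnull: "luzin_set L \<Longrightarrow> lnull L"
proof -
  assume "luzin_set L"
  obtain Z :: "real set" where Z: "lnull Z" "meager (- Z)"
    using ex_lnull_comeager by blast
  have "countable (L \<inter> - Z)"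
    using \<open>luzin_set L\<close> Z(2) unfolding luzin_set_def by blast
  then have "lnull ((L \<inter> - Z) \<union> Z)"
    using Z(1) lnull_Union[of "{L \<inter> - Z, Z}"] lnull_countable by auto
  then show "lnull L"
    by (rule lnull_subset) blast
qed

lemma sierpinski_set_meager: "sierpinski_set S \<Longrightarrow> meager S"
proof -
  assume "sierpinski_set S"
  obtain Z :: "real set" where Z: "lnull Z" "meager (- Z)"
    using ex_lnull_comeager by blast
  have "countable (S \<inter> Z)"
    using \<open>sierpinski_set S\<close> Z(1) unfolding sierpinski_set_def by blast
  then have "meager ((S \<inter> Z) \<union> - Z)"
    using Z(2) meager_Un meager_countable by blast
  then show "meager S"
    by (rule meager_subset) blast
qed

section \<open>Complete nonmeasurability\<close>

lemma completely_meager_nonmeasurable: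
  fixes A :: "(real \<times> real) set"
  assumes rows: "\<And>y. strong_luzin_set {x. (x, y) \<in> A}"
    and columns: "\<And>x. sierpinski_set {y. (x, y) \<in> A}"
  shows "completely_nonmeasurable meager A"
  unfolding completely_nonmeasurable_def
proof (intro ballI impI conjI)
  fix B :: "(real \<times> real) set"
  assume B: "B \<in> sets borel" "\<not> meager B"
  obtain y where "\<not> meager {x. (x, y) \<in> B}"
    using borel_not_meager_row_slice[OF B] by blast
  then have "uncountable ({x. (x, y) \<in> A} \<inter> {x. (x, y) \<in> B})"
    using rows[of y] sets_borel_slices(2)[OF B(1)] unfolding strong_luzin_set_def by blast
  then have "{x. (x, y) \<in> A} \<inter> {x. (x, y) \<in> B} \<noteq> {}"
    by auto
  then show "A \<inter> B \<noteq> {}"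
    by blast
  obtain x where x: "\<not> meager {y. (x, y) \<in> B}"
    using borel_not_meager_column_slice[OF B] by blast
  show "\<not> B \<subseteq> A"
  proof
    assume "B \<subseteq> A"
    then have "{y. (x, y) \<in> B} \<subseteq> {y. (x, y) \<in> A}"
      by blast
    then show False
      using x sierpinski_set_meager[OF columns] meager_subset by blast
  qed
qed

lemma completely_null_nonmeasurable:
  fixes A :: "(real \<times> real) set"
  assumes rows: "\<And>y. luzin_set {x. (x, y) \<in> A}"
    and columns: "\<And>x. strong_sierpinski_set {y. (x, y) \<in> A}"
  shows "completely_nonmeasurable lnull A"
  unfolding completely_nonmeasurable_def
proof (intro ballI impI conjI)
  fix B :: "(real \<times> real) set"
  assume B: "B \<in> sets borel" "\<not> lnull B"
  obtain x where "\<not> lnull {y. (x, y) \<in> B}"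
    using borel_not_lnull_slices(1)[OF B] by blast
  then have "uncountable ({y. (x, y) \<in> A} \<inter> {y. (x, y) \<in> B})"
    using columns[of x] sets_borel_slices(1)[OF B(1)] unfolding strong_sierpinski_set_def by blast
  then have "{y. (x, y) \<in> A} \<inter> {y. (x, y) \<in> B} \<noteq> {}"
    by auto
  then show "A \<inter> B \<noteq> {}"
    by blast
  obtain y where y: "\<not> lnull {x. (x, y) \<in> B}"
    using borel_not_lnull_slices(2)[OF B] by blast
  show "\<not> B \<subseteq> A"
  proof
    assume "B \<subseteq> A"
    then have "{x. (x, y) \<in> B} \<subseteq> {x. (x, y) \<in> A}"
      by blast
    then show False
      using y luzin_set_lnull[OF rows] lnull_subset by blast
  qed
qed

theorem mainTheorem4:
  assumes "CH"
  shows "\<exists>A :: (real \<times> real) set.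
           (\<forall>y. strong_luzin_set {x. (x, y) \<in> A}) \<and>
           (\<forall>x. strong_sierpinski_set {y. (x, y) \<in> A}) \<and>
           completely_nonmeasurable meager A \<and>
           completely_nonmeasurable lnull A"
proof -
  obtain r :: "real rel"
    where "trans r" "\<And>a b. (a, b) \<in> r \<or> (b, a) \<in> r" "\<And>a. countable {b. (b, a) \<in> r}"
    using CH_countable_segments[OF assms] by metis
  moreover obtain E :: "real \<Rightarrow> real set" where "\<And>G. gdelta G \<Longrightarrow> G \<in> range E"
    using gdelta_enumeration by metis
  ultimately interpret ch_construction r E
    by unfold_locales
  let ?A = "cross_set meager lnull"
  have rows: "strong_luzin_set {x. (x, y) \<in> ?A}" for y
    using cross_row_strong[OF gdelta_regular_sigma_ideal_meager gdelta_regular_sigma_ideal_lnull assms]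
    by (simp add: strong_luzin_set_iff_strong_set)
  have columns: "strong_sierpinski_set {y. (x, y) \<in> ?A}" for x
    using cross_row_strong[OF gdelta_regular_sigma_ideal_lnull gdelta_regular_sigma_ideal_meager assms, of x]
    by (simp add: strong_sierpinski_set_iff_strong_set cross_set_swap)
  have "completely_nonmeasurable meager ?A" "completely_nonmeasurable lnull ?A"
    using rows columns
    by (auto intro!: completely_meager_nonmeasurable completely_null_nonmeasurable
        simp: strong_luzin_set_def strong_sierpinski_set_def)
  then show ?thesis
    using rows columns by blast
qed

end
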